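(* For $n\ge2$ and variables $x_1,\dots,x_{n-1}$, $t_1,\dots,t_{n-1}$, $z_1,\dots,z_n$, define $$P_n=\sum_{\sigma\in S_n}(-1)^{\ell(\sigma)}\prod_{m=1}^{n-1}\Big(\prod_{k=1}^{m}(1+t_mz_{\sigma(k)}x_m)\prod_{k=m+1}^{n}(1-z_{\sigma(k)}x_m)\Big).$$ Then $$P_n=x_1\cdots x_{n-1}\prod_{i=1}^{n-1}(1+t_i)\prod_{1\le i<j\le n-1}(x_i+t_jx_j)\prod_{1\le i<j\le n}(z_i-z_j).$$
   Context: $\ell(\sigma)$ denotes the length (number of inversions) of $\sigma\in S_n$. *)

theory Defs
  imports "HOL-Combinatorics.Permutations"
begin

definition perm_length :: "nat \<Rightarrow> (nat \<Rightarrow> nat) \<Rightarrow> nat" where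
  "perm_length n \<sigma> = card {(i, j). i \<in> {1..n} \<and> j \<in> {1..n} \<and> i < j \<and> \<sigma> j < \<sigma> i}"

end

theory Submission
  imports Defs "Jordan_Normal_Form.Determinant"
begin

text \<open>With \<open>G\<^sub>k(w) = (\<Prod>m<k. 1 - x\<^sub>m w) * (\<Prod>m\<ge>k. 1 + t\<^sub>m x\<^sub>m w)\<close>, the alternating sum is the
  determinant of \<open>(G\<^sub>k(z\<^sub>j))\<^sub>k\<^sub>j\<close>, the product of the coefficient matrix of the \<open>G\<^sub>k\<close> with the
  Vandermonde matrix of the \<open>z\<^sub>j\<close>. Adding one more linear factor to the \<open>G\<^sub>k\<close> multiplies their
  coefficient rows by a bidiagonal matrix and appends the row of the product of all \<open>1 - x\<^sub>m w\<close>;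
  expanding the resulting determinant gives the value of that product at the root of the new factor,
  so the coefficient determinant is the product of the resultants \<open>-(x\<^sub>i + t\<^sub>j x\<^sub>j)\<close>, \<open>i \<le> j\<close>, of
  pairs of linear factors.\<close>

lemma index_mult_mat_sum:
  assumes "A \<in> carrier_mat n m" "B \<in> carrier_mat m k" "i < n" "j < k"
  shows "(A * B) $$ (i, j) = (\<Sum>l<m. A $$ (i, l) * B $$ (l, j))"
  using assms by (auto simp: scalar_prod_def atLeast0LessThan intro!: sum.cong)

lemma det_col_zero_off_diag:
  fixes A :: "'a::comm_ring_1 mat"
  assumes A: "A \<in> carrier_mat n n" and k: "k < n"
    and zero: "\<And>i. i < n \<Longrightarrow> i \<noteq> k \<Longrightarrow> A $$ (i, k) = 0"
  shows "det A = A $$ (k, k) * det (mat_delete A k k)"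
proof -
  have "det A = (\<Sum>i<n. A $$ (i, k) * cofactor A i k)"
    by (rule laplace_expansion_column[OF A k])
  also have "\<dots> = A $$ (k, k) * cofactor A k k"
    using k by (subst sum.remove[of _ k]) (auto simp: zero)
  finally show ?thesis
    by (simp add: cofactor_def)
qed

lemma det_diagonal_mat:
  "det (mat n n (\<lambda>(i, j). if i = j then c i else 0)) = (\<Prod>i<n. c i :: 'a::comm_ring_1)"
  by (subst det_upper_triangular[of _ n])
     (auto simp: upper_triangular_def prod_list_diag_prod atLeast0LessThan)

lemma det_vandermonde:
  fixes w :: "nat \<Rightarrow> 'a::comm_ring_1"
  shows "det (mat s s (\<lambda>(i, j). w j ^ i)) = (\<Prod>j<s. \<Prod>i<j. w j - w i)"
proof (induction s arbitrary: w)
  case 0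
  then show ?case
    by simp
next
  case (Suc s)
  define w' where "w' j = w (Suc j)" for j
  define V where "V = mat (Suc s) (Suc s) (\<lambda>(i, j). w j ^ i)"
  \<comment> \<open>\<open>E\<close> subtracts \<open>w 0\<close> times each row from the next one, which clears the first column.\<close>
  define E :: "'a mat" where
    "E = mat (Suc s) (Suc s) (\<lambda>(i, j). if i = j then 1 else if i = Suc j then - w 0 else 0)"
  define EV where
    "EV = mat (Suc s) (Suc s) (\<lambda>(i, j). if i = 0 then 1 else w j ^ (i - 1) * (w j - w 0))"
  have V: "V \<in> carrier_mat (Suc s) (Suc s)" and E: "E \<in> carrier_mat (Suc s) (Suc s)"
    by (simp_all add: V_def E_def)
  have det_E: "det E = 1"
    by (subst det_lower_triangular[of "Suc s"]) (auto simp: E_def prod_list_diag_prod)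
  have "E * V = EV"
  proof (rule eq_matI)
    fix i j
    assume "i < dim_row EV" "j < dim_col EV"
    then have i: "i < Suc s" and j: "j < Suc s"
      by (simp_all add: EV_def)
    have "(E * V) $$ (i, j) = (\<Sum>l<Suc s. (if i = l then w j ^ l else 0)
        + (if i = Suc l then - w 0 * w j ^ l else 0))"
      by (subst index_mult_mat_sum[OF E V i j]) (auto simp: E_def V_def i j intro!: sum.cong)
    also have "\<dots> = EV $$ (i, j)"
      using i j by (cases i) (auto simp: EV_def sum.distrib algebra_simps, metis Suc_lessI power_Suc)
    finally show "(E * V) $$ (i, j) = EV $$ (i, j)" .
  qed (simp_all add: E_def V_def EV_def)
  moreover have "mat_delete EV 0 0
      = mat s s (\<lambda>(i, j). w' j ^ i) * mat s s (\<lambda>(i, j). if i = j then w' i - w 0 else 0)"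
    by (rule eq_matI)
       (auto simp: EV_def mat_delete_def w'_def scalar_prod_def sum.delta'
                   if_distrib cong: if_cong)
  ultimately have "det V = det (mat s s (\<lambda>(i, j). w' j ^ i)) * (\<Prod>j<s. w' j - w 0)"
    using det_mult[OF E V] det_col_zero_off_diag[of EV "Suc s" 0]
    by (simp add: det_E det_mult[of _ s] det_diagonal_mat) (simp add: EV_def)
  also have "\<dots> = (\<Prod>j<Suc s. \<Prod>i<j. w j - w i)"
  proof -
    have "(\<Prod>j<Suc s. \<Prod>i<j. w j - w i) = (\<Prod>j<s. (w' j - w 0) * (\<Prod>i<j. w' j - w' i))"
      by (simp only: prod.lessThan_Suc_shift) (simp add: w'_def)
    then show ?thesis
      by (simp add: Suc.IH prod.distrib mult.commute)
  qed
  finally show ?case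
    by (simp add: V_def)
qed

lemma poly_eq_sum_lessThan:
  fixes p :: "'a::comm_ring_1 poly"
  assumes "degree p < s"
  shows "poly p x = (\<Sum>i<s. coeff p i * x ^ i)"
  unfolding poly_altdef using assms
  by (intro sum.mono_neutral_left) (auto simp: coeff_eq_0)

lemma det_poly_eval_mat:
  fixes p :: "nat \<Rightarrow> 'a::comm_ring_1 poly"
  assumes deg: "\<And>k. k < s \<Longrightarrow> degree (p k) < s"
  shows "det (mat s s (\<lambda>(k, j). poly (p k) (w j)))
       = det (mat s s (\<lambda>(k, i). coeff (p k) i)) * (\<Prod>j<s. \<Prod>i<j. w j - w i)"
proof -
  have "mat s s (\<lambda>(k, j). poly (p k) (w j))
      = mat s s (\<lambda>(k, i). coeff (p k) i) * mat s s (\<lambda>(i, j). w j ^ i)"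
    by (rule eq_matI) (simp_all add: scalar_prod_def atLeast0LessThan poly_eq_sum_lessThan deg)
  then show ?thesis
    by (simp add: det_mult[of _ s] det_vandermonde)
qed

lemma coeff_linear_mult:
  "coeff ([:c, d:] * p) i = c * coeff p i + (if i = 0 then 0 else d * coeff p (i - 1))"
  by (cases i) simp_all

declare mult_pCons_left [simp del] \<comment> \<open>keeps the linear factors \<open>[:c, d:]\<close> intact\<close>

definition homog_eval :: "nat \<Rightarrow> (nat \<Rightarrow> 'a::comm_ring_1) \<Rightarrow> 'a \<Rightarrow> 'a \<Rightarrow> 'a" where
  "homog_eval e f u v = (\<Sum>i\<le>e. f i * u ^ i * v ^ (e - i))"

lemma homog_eval_linear_mult:
  assumes "degree p \<le> e"
  shows "homog_eval (Suc e) (coeff ([:c, d:] * p)) u v = (c * v + d * u) * homog_eval e (coeff p) u v"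
proof -
  have top: "coeff p (Suc e) = 0"
    using assms by (simp add: coeff_eq_0)
  have "(\<Sum>i\<le>Suc e. c * coeff p i * u ^ i * v ^ (Suc e - i)) = c * v * homog_eval e (coeff p) u v"
    by (simp add: top homog_eval_def sum_distrib_left Suc_diff_le algebra_simps)
  moreover have "(\<Sum>i\<le>Suc e. (if i = 0 then 0 else d * coeff p (i - 1)) * u ^ i * v ^ (Suc e - i))
      = d * u * homog_eval e (coeff p) u v"
    by (subst sum.atMost_Suc_shift) (simp add: homog_eval_def sum_distrib_left algebra_simps)
  moreover have "homog_eval (Suc e) (coeff ([:c, d:] * p)) u v
      = (\<Sum>i\<le>Suc e. c * coeff p i * u ^ i * v ^ (Suc e - i))
      + (\<Sum>i\<le>Suc e. (if i = 0 then 0 else d * coeff p (i - 1)) * u ^ i * v ^ (Suc e - i))"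
    unfolding homog_eval_def coeff_linear_mult by (simp add: sum.distrib[symmetric] algebra_simps)
  ultimately show ?thesis
    by (simp add: algebra_simps)
qed

lemma homog_eval_prod_linear:
  "homog_eval K (coeff (\<Prod>m<K. [:c m, d m:])) u v = (\<Prod>m<K. c m * v + d m * u)"
proof (induction K)
  case 0
  then show ?case
    by (simp add: homog_eval_def)
next
  case (Suc K)
  have "degree (\<Prod>m<K. [:c m, d m:]) \<le> (\<Sum>m<K. degree [:c m, d m:])"
    using degree_prod_sum_le[of "{..<K}" "\<lambda>m. [:c m, d m:]"] by (simp add: o_def)
  also have "\<dots> \<le> (\<Sum>m<K. 1)"
    by (intro sum_mono) (simp add: degree_pCons_eq_if)
  finally have "degree (\<Prod>m<K. [:c m, d m:]) \<le> K"
    by simp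
  then have "homog_eval (Suc K) (coeff ([:c K, d K:] * (\<Prod>m<K. [:c m, d m:]))) u v
      = (c K * v + d K * u) * (\<Prod>m<K. c m * v + d m * u)"
    by (simp only: homog_eval_linear_mult Suc.IH)
  then show ?case
    by (simp add: mult.commute)
qed

definition bidiag_mat :: "'a::comm_ring_1 \<Rightarrow> 'a \<Rightarrow> (nat \<Rightarrow> 'a) \<Rightarrow> nat \<Rightarrow> 'a mat" where
  "bidiag_mat a b f s = mat s s (\<lambda>(i, j). if i = s - 1 then f j
     else (if j = i then a else 0) + (if j = Suc i then b else 0))"

lemma bidiag_mat_carrier [simp]: "bidiag_mat a b f s \<in> carrier_mat s s"
  by (simp add: bidiag_mat_def)

lemma det_bidiag_mat: "det (bidiag_mat a b f (Suc s)) = homog_eval s f a (- b)"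
proof (induction s arbitrary: f)
  case 0
  show ?case
    by (subst det_single) (auto simp: bidiag_mat_def homog_eval_def)
next
  case (Suc s)
  define T where "T = bidiag_mat a b f (Suc (Suc s))"
  have T: "T \<in> carrier_mat (Suc (Suc s)) (Suc (Suc s))"
    by (simp add: T_def)
  have "det T = (\<Sum>i<Suc (Suc s). T $$ (i, 0) * cofactor T i 0)"
    by (rule laplace_expansion_column[OF T]) simp
  also have "\<dots> = a * det (mat_delete T 0 0) + f 0 * (- 1) ^ Suc s * det (mat_delete T (Suc s) 0)"
    by (subst sum.lessThan_Suc, subst sum.lessThan_Suc_shift) (simp add: T_def bidiag_mat_def cofactor_def)
  also have "mat_delete T 0 0 = bidiag_mat a b (\<lambda>j. f (Suc j)) (Suc s)"
    by (rule eq_matI) (auto simp: T_def bidiag_mat_def mat_delete_def)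
  also have "det (mat_delete T (Suc s) 0) = b ^ Suc s"
    by (subst det_lower_triangular[of "Suc s"])
       (auto simp: T_def bidiag_mat_def mat_delete_def prod_list_diag_prod)
  also have "det (bidiag_mat a b (\<lambda>j. f (Suc j)) (Suc s)) = homog_eval s (\<lambda>j. f (Suc j)) a (- b)"
    by (rule Suc.IH)
  also have "a * homog_eval s (\<lambda>j. f (Suc j)) a (- b) + f 0 * (- 1) ^ Suc s * b ^ Suc s
      = homog_eval (Suc s) f a (- b)"
    unfolding homog_eval_def
    by (subst sum.atMost_Suc_shift) (simp add: sum_distrib_left power_minus[of b] algebra_simps)
  finally show ?case
    by (simp add: T_def)
qed

definition staircase_poly ::
  "(nat \<Rightarrow> 'a) \<Rightarrow> (nat \<Rightarrow> 'a) \<Rightarrow> (nat \<Rightarrow> 'a) \<Rightarrow> (nat \<Rightarrow> 'a) \<Rightarrow> nat \<Rightarrow> nat \<Rightarrow> 'a::comm_ring_1 poly"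
  where "staircase_poly a b c d K k = (\<Prod>m<K. if k \<le> m then [:a m, b m:] else [:c m, d m:])"

lemma staircase_poly_Suc:
  "staircase_poly a b c d (Suc K) k
     = (if k \<le> K then [:a K, b K:] else [:c K, d K:]) * staircase_poly a b c d K k"
  by (simp add: staircase_poly_def mult.commute)

lemma degree_staircase_poly: "degree (staircase_poly a b c d K k) \<le> K"
proof (induction K)
  case 0
  then show ?case
    by (simp add: staircase_poly_def)
next
  case (Suc K)
  have "degree (staircase_poly a b c d (Suc K) k)
      \<le> degree (if k \<le> K then [:a K, b K:] else [:c K, d K:]) + degree (staircase_poly a b c d K k)"
    unfolding staircase_poly_Suc by (rule degree_mult_le)
  also have "\<dots> \<le> Suc K"
    using Suc.IH by simp
  finally show ?case .
qed

definition staircase_coeff_mat ::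
  "(nat \<Rightarrow> 'a) \<Rightarrow> (nat \<Rightarrow> 'a) \<Rightarrow> (nat \<Rightarrow> 'a) \<Rightarrow> (nat \<Rightarrow> 'a) \<Rightarrow> nat \<Rightarrow> 'a::comm_ring_1 mat"
  where "staircase_coeff_mat a b c d K
    = mat (Suc K) (Suc K) (\<lambda>(k, i). coeff (staircase_poly a b c d K k) i)"

lemma staircase_coeff_mat_carrier [simp]:
  "staircase_coeff_mat a b c d K \<in> carrier_mat (Suc K) (Suc K)"
  by (simp add: staircase_coeff_mat_def)

lemma coeff_linear_mult_as_sum:
  assumes "degree p \<le> K"
  shows "(\<Sum>l<Suc K. coeff p l * ((if j = l then a else 0) + (if j = Suc l then b else 0)))
       = coeff ([:a, b:] * p) j"
proof -
  have high: "coeff p i = 0" if "K < i" for i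
    using assms that by (simp add: coeff_eq_0)
  have "(\<Sum>l<Suc K. coeff p l * ((if j = l then a else 0) + (if j = Suc l then b else 0)))
      = (\<Sum>l<Suc K. (if j = l then coeff p j * a else 0) + (if j = Suc l then coeff p (j - 1) * b else 0))"
    by (rule sum.cong) (auto simp: distrib_left)
  also have "\<dots> = (\<Sum>l<Suc K. if j = l then coeff p j * a else 0)
      + (\<Sum>l<Suc K. if j = Suc l then coeff p (j - 1) * b else 0)"
    by (rule sum.distrib)
  also have "\<dots> = coeff ([:a, b:] * p) j"
    using high by (cases j) (auto simp: coeff_linear_mult sum.delta' less_Suc_eq mult.commute)
  finally show ?thesis .
qed

lemma staircase_coeff_mat_Suc:
  "staircase_coeff_mat a b c d (Suc K)
     = four_block_mat (staircase_coeff_mat a b c d K) (0\<^sub>m (Suc K) 1) (0\<^sub>m 1 (Suc K)) (1\<^sub>m 1)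
       * bidiag_mat (a K) (b K) (coeff (\<Prod>m<Suc K. [:c m, d m:])) (Suc (Suc K))"
  (is "?C = ?B * ?T")
proof (rule eq_matI)
  have B: "?B \<in> carrier_mat (Suc (Suc K)) (Suc (Suc K))"
    using four_block_carrier_mat[OF staircase_coeff_mat_carrier one_carrier_mat[of 1]] by simp
  have T: "?T \<in> carrier_mat (Suc (Suc K)) (Suc (Suc K))"
    by simp
  fix k j
  assume "k < dim_row (?B * ?T)" "j < dim_col (?B * ?T)"
  then have k: "k < Suc (Suc K)" and j: "j < Suc (Suc K)"
    using carrier_matD[OF B] carrier_matD[OF T] by simp_all
  show "?C $$ (k, j) = (?B * ?T) $$ (k, j)"
  proof (cases "k = Suc K")
    case True
    then show ?thesis
      using j by (subst index_mult_mat_sum[OF B T k j])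
        (simp add: sum.lessThan_Suc staircase_coeff_mat_def bidiag_mat_def staircase_poly_def)
  next
    case False
    then have kK: "k \<le> K"
      using k by simp
    define G where "G = staircase_poly a b c d K k"
    have "(?B * ?T) $$ (k, j)
        = (\<Sum>l<Suc K. coeff G l * ((if j = l then a K else 0) + (if j = Suc l then b K else 0)))"
      using kK j by (subst index_mult_mat_sum[OF B T k j])
        (simp add: sum.lessThan_Suc staircase_coeff_mat_def bidiag_mat_def G_def)
    also have "\<dots> = coeff ([:a K, b K:] * G) j"
      unfolding G_def by (rule coeff_linear_mult_as_sum[OF degree_staircase_poly])
    also have "\<dots> = ?C $$ (k, j)"
      using k j kK by (simp add: staircase_coeff_mat_def staircase_poly_Suc G_def)
    finally show ?thesis ..
  qed
qed (simp_all add: staircase_coeff_mat_def bidiag_mat_def)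

lemma det_staircase_coeff_mat:
  "det (staircase_coeff_mat a b c d K) = (\<Prod>j<K. \<Prod>i\<le>j. a j * d i - b j * c i)"
proof (induction K)
  case 0
  show ?case
    by (subst det_single) (auto simp: staircase_coeff_mat_def staircase_poly_def)
next
  case (Suc K)
  have "det (staircase_coeff_mat a b c d (Suc K))
      = det (staircase_coeff_mat a b c d K) * homog_eval (Suc K) (coeff (\<Prod>m<Suc K. [:c m, d m:])) (a K) (- b K)"
    unfolding staircase_coeff_mat_Suc
    using four_block_carrier_mat[OF staircase_coeff_mat_carrier one_carrier_mat[of 1]]
    by (subst det_mult[of _ "Suc (Suc K)"])
       (simp_all add: det_bidiag_mat det_four_block_mat_upper_right_zero_col[of _ "Suc K"])
  also have "homog_eval (Suc K) (coeff (\<Prod>m<Suc K. [:c m, d m:])) (a K) (- b K)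
      = (\<Prod>m<Suc K. c m * - b K + d m * a K)"
    by (rule homog_eval_prod_linear)
  finally show ?case
    by (simp add: Suc.IH algebra_simps flip: lessThan_Suc_atMost)
qed

lemma det_staircase_poly_eval:
  "det (mat (Suc K) (Suc K) (\<lambda>(k, j). poly (staircase_poly a b c d K k) (w j)))
     = (\<Prod>j<K. \<Prod>i\<le>j. a j * d i - b j * c i) * (\<Prod>j<Suc K. \<Prod>i<j. w j - w i)"
  using det_poly_eval_mat[of "Suc K" "staircase_poly a b c d K" w] degree_staircase_poly[of a b c d K]
  by (simp add: le_imp_less_Suc det_staircase_coeff_mat flip: staircase_coeff_mat_def)

definition inversions :: "'a::linorder set \<Rightarrow> ('a \<Rightarrow> 'a) \<Rightarrow> ('a \<times> 'a) set" where
  "inversions S p = {(i, j). i \<in> S \<and> j \<in> S \<and> i < j \<and> p j < p i}"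

lemma bij_betw_sorted_image_pairs:
  fixes p :: "'a::linorder \<Rightarrow> 'a"
  assumes p: "p permutes S" and S: "finite S"
  defines "P \<equiv> {(i, j). i \<in> S \<and> j \<in> S \<and> i < j}"
  shows "bij_betw (\<lambda>(i, j). if p i < p j then (p i, p j) else (p j, p i)) P P"
proof -
  define sort2 where "sort2 = (\<lambda>(i, j). if p i < p j then (p i, p j) else (p j, p i))"
  have inj_p: "inj p"
    using p by (rule permutes_inj)
  have finite_P: "finite P"
    unfolding P_def by (rule finite_subset[of _ "S \<times> S"]) (auto simp: S)
  have "sort2 x \<in> P" if "x \<in> P" for x
  proof -
    obtain i j where x: "x = (i, j)" and ij: "(i, j) \<in> P"
      using \<open>x \<in> P\<close> by (cases x) auto
    have image: "p i \<in> S" "p j \<in> S" and "p i \<noteq> p j"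
      using ij permutes_in_image[OF p] inj_eq[OF inj_p, of i j] by (auto simp: P_def)
    then consider "p i < p j" | "p j < p i"
      by (meson linorder_neqE)
    then show ?thesis
      by cases (use image in \<open>simp_all add: x sort2_def P_def\<close>)
  qed
  then have "sort2 ` P \<subseteq> P"
    by blast
  moreover have "inj_on sort2 P"
  proof (rule inj_onI)
    fix x y
    assume "x \<in> P" "y \<in> P" "sort2 x = sort2 y"
    then show "x = y"
      using inj_p by (auto simp: P_def sort2_def inj_eq split: if_splits)
  qed
  ultimately have "bij_betw sort2 P P"
    using endo_inj_surj[OF finite_P] by (simp add: bij_betw_def)
  then show ?thesis
    by (simp add: sort2_def)
qed

lemma prod_pairs_permutes:
  fixes w :: "'a::linorder \<Rightarrow> 'b::comm_ring_1"
  assumes p: "p permutes S" and S: "finite S"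
  defines "P \<equiv> {(i, j). i \<in> S \<and> j \<in> S \<and> i < j}"
  shows "(\<Prod>(i, j)\<in>P. w (p j) - w (p i)) = (- 1) ^ card (inversions S p) * (\<Prod>(i, j)\<in>P. w j - w i)"
proof -
  define sort2 where "sort2 = (\<lambda>(i, j). if p i < p j then (p i, p j) else (p j, p i))"
  have finite_P: "finite P"
    unfolding P_def by (rule finite_subset[of _ "S \<times> S"]) (auto simp: S)
  have factor: "w (p j) - w (p i) = (if (i, j) \<in> inversions S p then - 1 else 1)
      * (case sort2 (i, j) of (i', j') \<Rightarrow> w j' - w i')" if "(i, j) \<in> P" for i j
  proof -
    have "p i \<noteq> p j"
      using that inj_eq[OF permutes_inj[OF p], of i j] by (auto simp: P_def)
    then show ?thesis
      using that by (auto simp: P_def inversions_def sort2_def)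
  qed
  have "(\<Prod>(i, j)\<in>P. w (p j) - w (p i)) = (\<Prod>x\<in>P. if x \<in> inversions S p then - 1 else 1)
      * (\<Prod>x\<in>P. case sort2 x of (i, j) \<Rightarrow> w j - w i)"
    by (subst prod.distrib[symmetric]) (auto intro!: prod.cong simp: factor)
  also have "(\<Prod>x\<in>P. case sort2 x of (i, j) \<Rightarrow> w j - w i) = (\<Prod>(i, j)\<in>P. w j - w i)"
    using prod.reindex_bij_betw[OF bij_betw_sorted_image_pairs[OF p S], of "\<lambda>(i, j). w j - w i"]
    by (simp add: sort2_def P_def)
  also have "(\<Prod>x\<in>P. if x \<in> inversions S p then - 1 else (1::'b)) = (- 1) ^ card (inversions S p)"
  proof -
    have "inversions S p \<subseteq> P"
      by (auto simp: inversions_def P_def)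
    then show ?thesis
      by (simp add: prod.If_cases[OF finite_P] Int_absorb1)
  qed
  finally show ?thesis .
qed

lemma prod_lessThan_pairs:
  fixes n :: nat
  shows "(\<Prod>j<n. \<Prod>i<j. g i j) = (\<Prod>(i, j)\<in>{(i, j). i \<in> {0..<n} \<and> j \<in> {0..<n} \<and> i < j}. g i j)"
proof -
  have "(\<Prod>j<n. \<Prod>i<j. g i j) = (\<Prod>(j, i)\<in>(SIGMA j:{..<n}. {..<j}). g i j)"
    by (rule prod.Sigma) auto
  also have "\<dots> = (\<Prod>(i, j)\<in>{(i, j). i \<in> {0..<n} \<and> j \<in> {0..<n} \<and> i < j}. g i j)"
    by (rule prod.reindex_bij_witness[of _ prod.swap prod.swap]) auto
  finally show ?thesis .
qed

lemma inversions_image_strict_mono: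
  assumes f: "strict_mono f" and q: "\<And>i. i \<in> S \<Longrightarrow> q (f i) = f (p i)"
  shows "inversions (f ` S) q = map_prod f f ` inversions S p"
  using q by (auto simp: inversions_def strict_mono_less[OF f] image_iff)

text \<open>The sign is read off the Vandermonde determinant at the distinct integers \<open>0, \<dots>, n - 1\<close>.\<close>
lemma sign_eq_inversions:
  fixes p :: "nat \<Rightarrow> nat"
  assumes p: "p permutes {0..<n}"
  shows "sign p = (- 1) ^ card (inversions {0..<n} p)"
proof -
  define V where "V w = mat n n (\<lambda>(i, j). w j ^ i)" for w :: "nat \<Rightarrow> int"
  have "det (V (int \<circ> p)) = det (transpose_mat (mat n n (\<lambda>(i, j). transpose_mat (V int) $$ (p i, j))))"
    using permutes_in_image[OF p] by (intro arg_cong[of _ _ det] eq_matI) (auto simp: V_def)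
  also have "\<dots> = sign p * det (V int)"
    by (simp add: det_transpose[of _ n] det_permute_rows[OF _ p] V_def)
  finally have "(- 1) ^ card (inversions {0..<n} p) * (\<Prod>j<n. \<Prod>i<j. int j - int i)
      = sign p * (\<Prod>j<n. \<Prod>i<j. int j - int i)"
    by (simp only: V_def det_vandermonde prod_lessThan_pairs o_apply
        prod_pairs_permutes[OF p finite_atLeastLessThan])
  moreover have "(\<Prod>j<n. \<Prod>i<j. int j - int i) \<noteq> 0"
    by simp
  ultimately show ?thesis
    by simp
qed

lemma perm_length_shift:
  assumes p: "p permutes {0..<n}" and \<sigma>: "\<And>i. i < n \<Longrightarrow> \<sigma> (Suc i) = Suc (p i)"
  shows "(- 1) ^ perm_length n \<sigma> = (of_int (sign p) :: 'a::comm_ring_1)"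
proof -
  have "perm_length n \<sigma> = card (inversions (Suc ` {0..<n}) \<sigma>)"
    by (simp add: perm_length_def inversions_def atLeastLessThanSuc_atLeastAtMost)
  also have "inversions (Suc ` {0..<n}) \<sigma> = map_prod Suc Suc ` inversions {0..<n} p"
    by (rule inversions_image_strict_mono) (simp_all add: strict_mono_Suc_iff \<sigma>)
  also have "card \<dots> = card (inversions {0..<n} p)"
    by (rule card_image) (auto simp: inj_on_def)
  finally show ?thesis
    by (simp add: sign_eq_inversions[OF p])
qed

lemma det_mat_eq_sum_perm_length:
  fixes g :: "nat \<Rightarrow> nat \<Rightarrow> 'a::comm_ring_1"
  shows "det (mat n n (\<lambda>(i, j). g (Suc i) (Suc j)))
       = (\<Sum>\<sigma> | \<sigma> permutes {1..n}. (- 1) ^ perm_length n \<sigma> * (\<Prod>k = 1..n. g k (\<sigma> k)))"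
proof -
  have one_n: "{1..n} = Suc ` {0..<n}"
    by (simp only: image_Suc_atLeastLessThan atLeastLessThanSuc_atLeastAtMost One_nat_def)
  define shift :: "(nat \<Rightarrow> nat) \<Rightarrow> nat \<Rightarrow> nat" where
    "shift p = (\<lambda>k. if k \<in> {1..n} then Suc (p (inv_into {0..<n} Suc k)) else k)" for p
  have bij: "bij_betw shift {p. p permutes {0..<n}} {\<sigma>. \<sigma> permutes {1..n}}"
    unfolding shift_def by (rule bij_betw_permutations) (simp only: bij_betw_Suc one_n)
  have shift_Suc: "shift p (Suc i) = Suc (p i)" if "i \<in> {0..<n}" for p i
    using that by (simp add: shift_def inv_into_f_f)
  have sign_shift: "(- 1) ^ perm_length n (shift p) = (of_int (sign p) :: 'a)" if "p permutes {0..<n}" for p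
    using that by (rule perm_length_shift) (simp add: shift_Suc)
  have prod_shift: "(\<Prod>k = 1..n. g k (shift p k)) = (\<Prod>i = 0..<n. g (Suc i) (Suc (p i)))" for p
    unfolding one_n by (subst prod.reindex) (simp_all add: shift_Suc)
  have prod_mat: "(\<Prod>i = 0..<n. g (Suc i) (Suc (p i)))
      = (\<Prod>i = 0..<n. mat n n (\<lambda>(i, j). g (Suc i) (Suc j)) $$ (i, p i))" if "p permutes {0..<n}" for p
    using permutes_in_image[OF that] by (intro prod.cong) simp_all
  have "(\<Sum>\<sigma> | \<sigma> permutes {1..n}. (- 1) ^ perm_length n \<sigma> * (\<Prod>k = 1..n. g k (\<sigma> k)))
      = (\<Sum>p | p permutes {0..<n}. (- 1) ^ perm_length n (shift p) * (\<Prod>k = 1..n. g k (shift p k)))"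
    by (rule sum.reindex_bij_betw[OF bij, symmetric])
  also have "\<dots> = (\<Sum>p | p permutes {0..<n}. of_int (sign p) * (\<Prod>i = 0..<n. g (Suc i) (Suc (p i))))"
    by (intro sum.cong refl) (simp only: mem_Collect_eq sign_shift prod_shift)
  also have "\<dots> = (\<Sum>p | p permutes {0..<n}.
      of_int (sign p) * (\<Prod>i = 0..<n. mat n n (\<lambda>(i, j). g (Suc i) (Suc j)) $$ (i, p i)))"
    by (intro sum.cong refl) (simp only: mem_Collect_eq prod_mat)
  also have "\<dots> = det (mat n n (\<lambda>(i, j). g (Suc i) (Suc j)))"
    by (rule det_def'[symmetric]) simp
  finally show ?thesis ..
qed

lemma prod_split_at_swap:
  fixes f g :: "nat \<Rightarrow> nat \<Rightarrow> 'a::comm_monoid_mult"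
  assumes "\<And>m. m \<in> M \<Longrightarrow> m \<le> n"
  shows "(\<Prod>m\<in>M. (\<Prod>k = 1..m. f m k) * (\<Prod>k = m+1..n. g m k))
       = (\<Prod>k = 1..n. \<Prod>m\<in>M. if k \<le> m then f m k else g m k)"
proof -
  have "(\<Prod>k = 1..m. f m k) * (\<Prod>k = m+1..n. g m k) = (\<Prod>k = 1..n. if k \<le> m then f m k else g m k)"
    if "m \<le> n" for m
  proof -
    have "{1..n} \<inter> {k. k \<le> m} = {1..m}" and "{1..n} \<inter> - {k. k \<le> m} = {m+1..n}"
      using that by auto
    then show ?thesis
      by (simp add: prod.If_cases)
  qed
  then show ?thesis
    using assms by (simp add: prod.swap[of _ _ M])
qed

lemma prod_triangles_uminus:
  fixes f g :: "nat \<Rightarrow> nat \<Rightarrow> 'a::comm_ring_1"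
  shows "(\<Prod>j<K. \<Prod>i\<le>j. - f j i) * (\<Prod>j<Suc K. \<Prod>i<j. - g j i)
       = (\<Prod>j<K. \<Prod>i\<le>j. f j i) * (\<Prod>j<Suc K. \<Prod>i<j. g j i)"
proof -
  define s :: 'a where "s = (\<Prod>j<K. (- 1) ^ Suc j)"
  have f: "(\<Prod>j<K. \<Prod>i\<le>j. - f j i) = s * (\<Prod>j<K. \<Prod>i\<le>j. f j i)"
    by (simp add: s_def prod_uminus prod.distrib)
  have g: "(\<Prod>j<Suc K. \<Prod>i<j. - g j i) = s * (\<Prod>j<Suc K. \<Prod>i<j. g j i)"
    by (simp add: s_def prod_uminus prod.distrib prod.lessThan_Suc_shift del: prod.lessThan_Suc)
  have "s * s = 1"
    by (simp add: s_def prod.distrib[symmetric] flip: power_add mult_2)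
  moreover have "s * a * (s * b) = s * s * (a * b)" for a b
    by (simp only: ac_simps)
  ultimately show ?thesis
    unfolding f g by simp
qed

lemma prod_staircase_rows:
  fixes x t y :: "nat \<Rightarrow> 'a::comm_ring_1"
  shows "(\<Prod>m = 1..n-1. (\<Prod>k = 1..m. 1 + t m * y k * x m) * (\<Prod>k = m+1..n. 1 - y k * x m))
       = (\<Prod>k = 1..n. poly (staircase_poly (\<lambda>_. 1) (\<lambda>m. t (Suc m) * x (Suc m)) (\<lambda>_. 1) (\<lambda>m. - x (Suc m))
            (n - 1) (k - 1)) (y k))"
proof -
  have "(\<Prod>m = 1..n-1. (\<Prod>k = 1..m. 1 + t m * y k * x m) * (\<Prod>k = m+1..n. 1 - y k * x m))
      = (\<Prod>k = 1..n. \<Prod>m = 1..n-1. if k \<le> m then 1 + t m * y k * x m else 1 - y k * x m)"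
    by (rule prod_split_at_swap) auto
  also have "\<dots> = (\<Prod>k = 1..n. poly (staircase_poly (\<lambda>_. 1) (\<lambda>m. t (Suc m) * x (Suc m)) (\<lambda>_. 1)
      (\<lambda>m. - x (Suc m)) (n - 1) (k - 1)) (y k))"
    by (intro prod.cong refl)
       (auto simp: staircase_poly_def poly_prod prod.atLeast1_atMost_eq algebra_simps intro!: prod.cong)
  finally show ?thesis .
qed

theorem mainTheorem8:
  fixes n :: nat and x t z :: "nat \<Rightarrow> 'a :: comm_ring_1"
  assumes "n \<ge> 2"
  shows "(\<Sum>\<sigma> | \<sigma> permutes {1..n}.
            (-1) ^ perm_length n \<sigma> *
            (\<Prod>m = 1..n-1. (\<Prod>k = 1..m. 1 + t m * z (\<sigma> k) * x m) *
                             (\<Prod>k = m+1..n. 1 - z (\<sigma> k) * x m)))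
       = (\<Prod>i = 1..n-1. x i) * (\<Prod>i = 1..n-1. 1 + t i)
         * (\<Prod>j = 1..n-1. \<Prod>i = 1..<j. x i + t j * x j)
         * (\<Prod>j = 1..n. \<Prod>i = 1..<j. z i - z j)"
proof -
  define K where "K = n - 1"
  have n: "n = Suc K"
    using assms by (simp add: K_def)
  define G where "G = staircase_poly (\<lambda>_. 1) (\<lambda>m. t (Suc m) * x (Suc m)) (\<lambda>_. 1) (\<lambda>m. - x (Suc m)) K"
  have "(\<Sum>\<sigma> | \<sigma> permutes {1..n}. (-1) ^ perm_length n \<sigma> *
            (\<Prod>m = 1..n-1. (\<Prod>k = 1..m. 1 + t m * z (\<sigma> k) * x m) * (\<Prod>k = m+1..n. 1 - z (\<sigma> k) * x m)))
      = (\<Sum>\<sigma> | \<sigma> permutes {1..n}. (-1) ^ perm_length n \<sigma> * (\<Prod>k = 1..n. poly (G (k - 1)) (z (\<sigma> k))))"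
    by (simp only: prod_staircase_rows G_def K_def)
  also have "\<dots> = det (mat (Suc K) (Suc K) (\<lambda>(k, j). poly (G k) (z (Suc j))))"
    using det_mat_eq_sum_perm_length[of n "\<lambda>k j. poly (G (k - 1)) (z j)"] by (simp add: n)
  also have "\<dots> = (\<Prod>j<K. \<Prod>i\<le>j. - (x (Suc i) + t (Suc j) * x (Suc j)))
      * (\<Prod>j<Suc K. \<Prod>i<j. - (z (Suc i) - z (Suc j)))"
    unfolding G_def det_staircase_poly_eval by (simp add: algebra_simps)
  also have "\<dots> = (\<Prod>j<K. \<Prod>i\<le>j. x (Suc i) + t (Suc j) * x (Suc j))
      * (\<Prod>j<Suc K. \<Prod>i<j. z (Suc i) - z (Suc j))"
    by (rule prod_triangles_uminus)
  also have "(\<Prod>j<K. \<Prod>i\<le>j. x (Suc i) + t (Suc j) * x (Suc j))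
      = (\<Prod>i = 1..n-1. x i) * (\<Prod>i = 1..n-1. 1 + t i) * (\<Prod>j = 1..n-1. \<Prod>i = 1..<j. x i + t j * x j)"
    by (simp add: K_def prod.distrib[symmetric] prod.atLeast1_atMost_eq prod.shift_bounds_Suc_ivl
        atLeast0LessThan lessThan_Suc_atMost[symmetric] algebra_simps del: prod.op_ivl_Suc)
  also have "(\<Prod>j<Suc K. \<Prod>i<j. z (Suc i) - z (Suc j)) = (\<Prod>j = 1..n. \<Prod>i = 1..<j. z i - z j)"
    by (simp add: n prod.atLeast1_atMost_eq prod.shift_bounds_Suc_ivl atLeast0LessThan del: prod.op_ivl_Suc)
  finally show ?thesis .
qed

end
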